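(* Let $\mathcal{R}$ be a right amenable cell space with finite stabiliser $G_0$, let $(\mathcal{R},Q,N,\delta)$ be a semi-cellular automaton with $Q$ finite, $N$ finite, whose global transition function is $\Delta$, and let $\mathcal{F}=(F_i)_{i\in I}$ be a right Følner net in $\mathcal{R}$. Suppose $\delta$ is $\bullet$-invariant, $Q$ contains at least two elements, and $\Delta$ is not surjective. Then $\mathrm{h}_{\mathcal{F}}(\Delta(Q^M))<\log|Q|$.
   Context: A cell space $\mathcal{R}$ consists of a group $G$ acting transitively on the left on a nonempty set $M$ via $\triangleright$, a point $m_0\in M$ and a family $(g_{m_0,m})_{m\in M}$ in $G$ with $g_{m_0,m}\triangleright m_0=m$. $G_0$ is the stabiliser of $m_0$, $G/G_0$ the set of left cosets, with $G$ acting by $g\cdot hG_0=ghG_0$. The right semi-action $\triangleleft\colon M\times G/G_0\to M$ is $m\triangleleft gG_0=g_{m_0,m}g\triangleright m_0$. $\mathcal{R}$ is right amenable if there is a finitely additive probability measure $\mu$ on the power set of $M$ such that $\mu(\{a\triangleleft\mathfrak{g}:a\in A\})=\mu(A)$ whenever $\mathfrak{g}\in G/G_0$, $A\subseteq M$ and $m\mapsto m\triangleleft\mathfrak{g}$ is injective on $A$. A right Følner net in $\mathcal{R}$ is a net $(F_i)_{i\in I}$ (over a directed set) of nonempty finite subsets of $M$ with $\lim_{i}\frac{|F_i\setminus\{m: m\triangleleft\mathfrak{g}\in F_i\}|}{|F_i|}=0$ for every $\mathfrak{g}\in G/G_0$. A semi-cellular automaton is $(\mathcal{R},Q,N,\delta)$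 with $Q$ a set, $N\subseteq G/G_0$ with $G_0\cdot N\subseteq N$, $\delta\colon Q^N\to Q$; its global transition function is $\Delta(c)(m)=\delta(n\mapsto c(m\triangleleft n))$. $\delta$ is $\bullet$-invariant if $\delta(g_0\bullet\ell)=\delta(\ell)$ for all $g_0\in G_0$, $\ell\in Q^N$, where $(g_0\bullet\ell)(n)=\ell(g_0^{-1}\cdot n)$. For $A\subseteq M$, $\pi_A\colon Q^M\to Q^A$ is restriction. For $X\subseteq Q^M$, $\mathrm{h}_{\mathcal{F}}(X)=\limsup_{i\in I}\frac{\log|\pi_{F_i}(X)|}{|F_i|}$. *)

theory Defs
  imports Complex_Main "HOL-Algebra.Coset" "HOL-Library.Extended_Real" "HOL-Library.Liminf_Limsup" "HOL-Library.FuncSet"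
begin

(* Cell space: group G acting on the left on the (type) M = UNIV :: 'm set via act,
   base point m0, family gfam with gfam m \<in> carrier G and act (gfam m) m0 = m. *)
definition cell_space :: "('g, 'b) monoid_scheme \<Rightarrow> ('g \<Rightarrow> 'm \<Rightarrow> 'm) \<Rightarrow> 'm \<Rightarrow> ('m \<Rightarrow> 'g) \<Rightarrow> bool" where
  "cell_space G act m0 gfam \<longleftrightarrow>
     group G \<and>
     (\<forall>m. act \<one>\<^bsub>G\<^esub> m = m) \<and>
     (\<forall>g\<in>carrier G. \<forall>h\<in>carrier G. \<forall>m. act (g \<otimes>\<^bsub>G\<^esub> h) m = act g (act h m)) \<and>
     (\<forall>m. \<exists>g\<in>carrier G. act g m0 = m) \<and>
     (\<forall>m. gfam m \<in> carrier G \<and> act (gfam m) m0 = m)"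

definition stab :: "('g, 'b) monoid_scheme \<Rightarrow> ('g \<Rightarrow> 'm \<Rightarrow> 'm) \<Rightarrow> 'm \<Rightarrow> 'g set" where
  "stab G act m0 = {g \<in> carrier G. act g m0 = m0}"

definition cosets :: "('g, 'b) monoid_scheme \<Rightarrow> ('g \<Rightarrow> 'm \<Rightarrow> 'm) \<Rightarrow> 'm \<Rightarrow> 'g set set" where
  "cosets G act m0 = {g <#\<^bsub>G\<^esub> stab G act m0 | g. g \<in> carrier G}"

(* right semi-action m \<triangleleft> gG_0 = g_{m0,m} g \<triangleright> m0 (independent of representative g) *)
definition rsemi :: "('g, 'b) monoid_scheme \<Rightarrow> ('g \<Rightarrow> 'm \<Rightarrow> 'm) \<Rightarrow> 'm \<Rightarrow> ('m \<Rightarrow> 'g) \<Rightarrow> 'm \<Rightarrow> 'g set \<Rightarrow> 'm" where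
  "rsemi G act m0 gfam m c =
     act (gfam m \<otimes>\<^bsub>G\<^esub> (SOME g. g \<in> carrier G \<and> c = g <#\<^bsub>G\<^esub> stab G act m0)) m0"

definition right_amenable :: "('g, 'b) monoid_scheme \<Rightarrow> ('g \<Rightarrow> 'm \<Rightarrow> 'm) \<Rightarrow> 'm \<Rightarrow> ('m \<Rightarrow> 'g) \<Rightarrow> bool" where
  "right_amenable G act m0 gfam \<longleftrightarrow>
     (\<exists>\<mu> :: 'm set \<Rightarrow> real.
        (\<forall>A. 0 \<le> \<mu> A) \<and> \<mu> UNIV = 1 \<and>
        (\<forall>A B. A \<inter> B = {} \<longrightarrow> \<mu> (A \<union> B) = \<mu> A + \<mu> B) \<and>
        (\<forall>c\<in>cosets G act m0. \<forall>A. inj_on (\<lambda>m. rsemi G act m0 gfam m c) A \<longrightarrow>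
              \<mu> ((\<lambda>m. rsemi G act m0 gfam m c) ` A) = \<mu> A))"

definition directed_set :: "('i \<Rightarrow> 'i \<Rightarrow> bool) \<Rightarrow> bool" where
  "directed_set rel \<longleftrightarrow> (\<forall>i. rel i i) \<and> (\<forall>i j k. rel i j \<longrightarrow> rel j k \<longrightarrow> rel i k)
      \<and> (\<forall>i j. \<exists>k. rel i k \<and> rel j k)"

definition net_filter :: "('i \<Rightarrow> 'i \<Rightarrow> bool) \<Rightarrow> 'i filter" where
  "net_filter rel = (INF i. principal {j. rel i j})"

definition right_folner_net ::
  "('g, 'b) monoid_scheme \<Rightarrow> ('g \<Rightarrow> 'm \<Rightarrow> 'm) \<Rightarrow> 'm \<Rightarrow> ('m \<Rightarrow> 'g) \<Rightarrow> ('i \<Rightarrow> 'i \<Rightarrow> bool) \<Rightarrow> ('i \<Rightarrow> 'm set) \<Rightarrow> bool" where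
  "right_folner_net G act m0 gfam rel F \<longleftrightarrow>
     directed_set rel \<and>
     (\<forall>i. finite (F i) \<and> F i \<noteq> {}) \<and>
     (\<forall>c\<in>cosets G act m0.
        ((\<lambda>i. real (card (F i - {m. rsemi G act m0 gfam m c \<in> F i})) / real (card (F i)))
            \<longlongrightarrow> 0) (net_filter rel))"

(* semi-cellular automaton (R, Q, N, delta) with Q = UNIV :: 'q set *)
definition semi_cellular_automaton ::
  "('g, 'b) monoid_scheme \<Rightarrow> ('g \<Rightarrow> 'm \<Rightarrow> 'm) \<Rightarrow> 'm \<Rightarrow> 'g set set \<Rightarrow> bool" where
  "semi_cellular_automaton G act m0 N \<longleftrightarrow>
     N \<subseteq> cosets G act m0 \<and>
     (\<forall>g0\<in>stab G act m0. \<forall>n\<in>N. g0 <#\<^bsub>G\<^esub> n \<in> N)"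

(* local configurations Q^N are N \<rightarrow>\<^sub>E UNIV; delta :: Q^N \<Rightarrow> Q *)
definition global_transition ::
  "('g, 'b) monoid_scheme \<Rightarrow> ('g \<Rightarrow> 'm \<Rightarrow> 'm) \<Rightarrow> 'm \<Rightarrow> ('m \<Rightarrow> 'g) \<Rightarrow> 'g set set
     \<Rightarrow> (('g set \<Rightarrow> 'q) \<Rightarrow> 'q) \<Rightarrow> ('m \<Rightarrow> 'q) \<Rightarrow> ('m \<Rightarrow> 'q)" where
  "global_transition G act m0 gfam N \<delta> c = (\<lambda>m. \<delta> (restrict (\<lambda>n. c (rsemi G act m0 gfam m n)) N))"

(* bullet-invariance: (g0 \<bullet> l)(n) = l(g0^{-1} \<cdot> n) *)
definition bullet_invariant ::
  "('g, 'b) monoid_scheme \<Rightarrow> ('g \<Rightarrow> 'm \<Rightarrow> 'm) \<Rightarrow> 'm \<Rightarrow> 'g set set \<Rightarrow> (('g set \<Rightarrow> 'q) \<Rightarrow> 'q) \<Rightarrow> bool" where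
  "bullet_invariant G act m0 N \<delta> \<longleftrightarrow>
     (\<forall>g0\<in>stab G act m0. \<forall>l\<in>N \<rightarrow>\<^sub>E (UNIV :: 'q set).
        \<delta> (restrict (\<lambda>n. l (inv\<^bsub>G\<^esub> g0 <#\<^bsub>G\<^esub> n)) N) = \<delta> l)"

definition entropy :: "('i \<Rightarrow> 'i \<Rightarrow> bool) \<Rightarrow> ('i \<Rightarrow> 'm set) \<Rightarrow> ('m \<Rightarrow> 'q) set \<Rightarrow> ereal" where
  "entropy rel F X =
     Limsup (net_filter rel) (\<lambda>i. ereal (ln (real (card ((\<lambda>c. restrict c (F i)) ` X))) / real (card (F i))))"

end

theory Submission
  imports Defs "HOL-Analysis.Analysis"
begin

text \<open>
  If \<open>\<Delta>\<close> is not surjective, compactness of \<open>Q\<^sup>M\<close> yields a finite pattern on a set \<open>E\<close>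
  that occurs in no configuration of \<open>\<Delta>(Q\<^sup>M)\<close>; by \<open>\<bullet>\<close>-invariance \<open>\<Delta>\<close> commutes with
  the action of \<open>G\<close>, so no translate \<open>t \<triangleleft> E\<close> of that pattern occurs either.  In a Folner
  set \<open>F\<close> at least half of the cells \<open>t\<close> have their translate inside \<open>F\<close>, and a greedy choice
  among them gives at least \<open>|F| / 2w\<close> pairwise disjoint translates, where \<open>w\<close> bounds how many
  translates meet a given one (finite because \<open>G\<^sub>0\<close> is).  Each disjoint translate rules out
  one of the \<open>|Q|\<^bsup>|E|\<^esup>\<close> patterns on it, hence
  \<open>log |\<pi>\<^sub>F(\<Delta>(Q\<^sup>M))| / |F| \<le> log |Q| + log (1 - |Q|\<^bsup>-|E|\<^esup>) / 2w\<close>,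
  a bound strictly below \<open>log |Q|\<close> that does not depend on \<open>F\<close>.
\<close>

lemma finitely_realisable_imp_realisable:
  fixes \<Phi> :: "('m \<Rightarrow> 'q::finite) \<Rightarrow> 'm \<Rightarrow> 'q" and D :: "'m \<Rightarrow> 'm set"
  assumes finite_D: "\<And>m. finite (D m)"
    and locality: "\<And>c c' m. (\<And>x. x \<in> D m \<Longrightarrow> c x = c' x) \<Longrightarrow> \<Phi> c m = \<Phi> c' m"
    and finitely_realisable: "\<And>E. finite E \<Longrightarrow> \<exists>c. \<forall>m\<in>E. \<Phi> c m = y m"
  shows "\<exists>c. \<Phi> c = y"
proof -
  define X where "X = product_topology (\<lambda>_::'m. discrete_topology (UNIV::'q set)) UNIV"
  have topspace_X: "topspace X = UNIV"
    unfolding X_def by (auto simp: PiE_def extensional_def)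
  have "compact_space X"
    unfolding X_def by (simp add: compact_space_product_topology compact_space_discrete_topology)
  have cylinder_open: "openin X {c. c x = a}" for x a
    using openin_continuous_map_preimage[OF continuous_map_product_projection, of x UNIV
        "\<lambda>_. discrete_topology UNIV" "{a}"]
    by (simp add: X_def[symmetric] topspace_X)
  define C where "C m = {c. \<Phi> c m = y m}" for m
  have "closedin X (C m)" for m
  proof -
    define agree where "agree c = {c'. \<forall>x\<in>D m. c' x = c x}" for c :: "'m \<Rightarrow> 'q"
    have "openin X (agree c)" for c
    proof -
      have "openin X ((\<Inter>x\<in>D m. {c'. c' x = c x}) \<inter> topspace X)"
        using finite_D cylinder_open by (intro openin_INT) auto
      moreover have "(\<Inter>x\<in>D m. {c'. c' x = c x}) \<inter> topspace X = agree c"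
        by (auto simp: topspace_X agree_def)
      ultimately show ?thesis
        by simp
    qed
    moreover have "- C m = (\<Union>c\<in>- C m. agree c)"
    proof
      have "c \<in> agree c" for c
        by (simp add: agree_def)
      then show "- C m \<subseteq> (\<Union>c\<in>- C m. agree c)"
        by blast
      show "(\<Union>c\<in>- C m. agree c) \<subseteq> - C m"
      proof
        fix c' assume "c' \<in> (\<Union>c\<in>- C m. agree c)"
        then obtain c where "c \<notin> C m" "\<forall>x\<in>D m. c' x = c x"
          by (auto simp: agree_def)
        then show "c' \<in> - C m"
          using locality[of m c' c] by (simp add: C_def)
      qed
    qed
    ultimately have "openin X (- C m)"
      by (metis openin_Union imageE)
    then show ?thesis
      by (simp add: closedin_def topspace_X Compl_eq_Diff_UNIV)
  qed
  moreover have "\<Inter>\<F> \<noteq> {}" if \<F>: "finite \<F>" "\<F> \<subseteq> range C" for \<F>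
  proof -
    obtain E where E: "finite E" "\<F> = C ` E"
      using \<F> by (meson finite_subset_image)
    obtain c where "\<forall>m\<in>E. \<Phi> c m = y m"
      using finitely_realisable[OF E(1)] by blast
    then have "c \<in> \<Inter>\<F>"
      by (simp add: E(2) C_def)
    then show ?thesis
      by blast
  qed
  ultimately have "\<Inter>(range C) \<noteq> {}"
    using \<open>compact_space X\<close>[unfolded compact_space_fip, rule_format, of "range C"] by blast
  then show ?thesis
    by (auto simp: C_def)
qed

lemma disjoint_subfamily_meeting_all:
  fixes K :: "'a \<Rightarrow> 'b set"
  assumes "finite A" and "\<And>x. x \<in> A \<Longrightarrow> K x \<noteq> {}"
  obtains T where "T \<subseteq> A" and "disjoint_family_on K T"
    and "\<And>x. x \<in> A \<Longrightarrow> \<exists>u\<in>T. K x \<inter> K u \<noteq> {}"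
proof -
  have "\<exists>T\<subseteq>A. disjoint_family_on K T \<and> (\<forall>x\<in>A. \<exists>u\<in>T. K x \<inter> K u \<noteq> {})"
    using assms
  proof (induction A rule: finite_induct)
    case empty
    show ?case
      by (simp add: disjoint_family_on_def)
  next
    case (insert x A)
    then obtain T where T: "T \<subseteq> A" "disjoint_family_on K T" "\<forall>x\<in>A. \<exists>u\<in>T. K x \<inter> K u \<noteq> {}"
      by auto
    show ?case
    proof (cases "\<exists>u\<in>T. K x \<inter> K u \<noteq> {}")
      case True
      with T show ?thesis
        by (intro exI[of _ T]) auto
    next
      case False
      then have "disjoint_family_on K (insert x T)"
        using T(2) by (auto simp: disjoint_family_on_def)
      with T insert.prems show ?thesis
        by (intro exI[of _ "insert x T"]) auto
    qed
  qed
  with that show thesis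
    by auto
qed

lemma large_disjoint_subfamily:
  fixes K :: "'a \<Rightarrow> 'b set"
  assumes "finite A" and "\<And>x. x \<in> A \<Longrightarrow> K x \<noteq> {}"
    and "\<And>u. u \<in> A \<Longrightarrow> card {x \<in> A. K x \<inter> K u \<noteq> {}} \<le> w"
  obtains T where "T \<subseteq> A" and "disjoint_family_on K T" and "card A \<le> card T * w"
proof -
  obtain T where T: "T \<subseteq> A" "disjoint_family_on K T" "\<And>x. x \<in> A \<Longrightarrow> \<exists>u\<in>T. K x \<inter> K u \<noteq> {}"
    by (rule disjoint_subfamily_meeting_all[OF assms(1,2)]) auto
  have "card A \<le> card (\<Union>u\<in>T. {x \<in> A. K x \<inter> K u \<noteq> {}})"
    using T(3) by (intro card_mono) (auto intro: rev_finite_subset[OF \<open>finite A\<close>])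
  also have "\<dots> \<le> (\<Sum>u\<in>T. card {x \<in> A. K x \<inter> K u \<noteq> {}})"
    using T(1) \<open>finite A\<close> by (intro card_UN_le) (rule finite_subset)
  also have "\<dots> \<le> card T * w"
    using sum_mono[of T _ "\<lambda>_. w"] assms(3) T(1) by (simp add: subset_iff)
  finally show thesis
    using that T(1,2) by blast
qed

lemma card_PiE_avoiding_le:
  fixes K :: "'t \<Rightarrow> 'm set" and p :: "'t \<Rightarrow> 'm \<Rightarrow> 'q::finite"
  assumes "finite T" and "finite F" and "disjoint_family_on K T"
    and "\<And>t. t \<in> T \<Longrightarrow> K t \<subseteq> F \<and> card (K t) = s \<and> p t \<in> K t \<rightarrow>\<^sub>E UNIV"
  shows "card {f \<in> F \<rightarrow>\<^sub>E UNIV. \<forall>t\<in>T. restrict f (K t) \<noteq> p t} * CARD('q) ^ (s * card T)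
           \<le> CARD('q) ^ card F * (CARD('q) ^ s - 1) ^ card T"
  using assms
proof (induction T arbitrary: F rule: finite_induct)
  case empty
  then show ?case
    by (simp add: card_PiE)
next
  case (insert t T F)
  let ?q = "CARD('q)"
  define F' where "F' = F - K t"
  have Kt: "K t \<subseteq> F" "card (K t) = s" "p t \<in> K t \<rightarrow>\<^sub>E UNIV"
    using insert.prems by auto
  have "finite (K t)"
    using Kt(1) insert.prems(1) finite_subset by blast
  have K_F': "K u \<subseteq> F'" if "u \<in> T" for u
    using insert.prems that insert.hyps(2) unfolding F'_def disjoint_family_on_def by fastforce
  define A where "A = {f \<in> F \<rightarrow>\<^sub>E UNIV. \<forall>u\<in>insert t T. restrict f (K u) \<noteq> p u}"
  define B where "B = {f \<in> F' \<rightarrow>\<^sub>E UNIV. \<forall>u\<in>T. restrict f (K u) \<noteq> p u}"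
  define split where "split f = (restrict f F', restrict f (K t))" for f :: "'m \<Rightarrow> 'q"
  have "inj_on split A"
  proof (rule inj_onI)
    fix f g assume "f \<in> A" "g \<in> A" "split f = split g"
    then have ext: "f \<in> extensional F" "g \<in> extensional F"
      and "restrict f F' = restrict g F'" "restrict f (K t) = restrict g (K t)"
      unfolding A_def split_def by (auto simp: PiE_def)
    then have "f x = g x" if "x \<in> F" for x
      using that unfolding F'_def by (metis Diff_iff restrict_apply')
    with ext show "f = g"
      by (rule extensionalityI)
  qed
  moreover have "split ` A \<subseteq> B \<times> ((K t \<rightarrow>\<^sub>E UNIV) - {p t})"
  proof (rule image_subsetI)
    fix f assume "f \<in> A"
    moreover have "restrict (restrict f F') (K u) = restrict f (K u)" if "u \<in> T" for u
      using K_F'[OF that] by (simp add: Int_absorb1 inf_commute)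
    ultimately show "split f \<in> B \<times> ((K t \<rightarrow>\<^sub>E UNIV) - {p t})"
      unfolding A_def B_def split_def by auto
  qed
  moreover have "finite B"
    unfolding B_def using insert.prems(1) F'_def by (auto intro: finite_subset[OF _ finite_PiE])
  ultimately have "card A \<le> card (B \<times> ((K t \<rightarrow>\<^sub>E UNIV) - {p t}))"
    using \<open>finite (K t)\<close> by (intro card_inj_on_le) (auto simp: finite_PiE)
  also have "\<dots> = card B * (?q ^ s - 1)"
    using Kt \<open>finite (K t)\<close> by (simp add: card_cartesian_product card_Diff_singleton card_PiE)
  finally have A_le: "card A \<le> card B * (?q ^ s - 1)" .
  have IH: "card B * ?q ^ (s * card T) \<le> ?q ^ card F' * (?q ^ s - 1) ^ card T"
    unfolding B_def
  proof (rule insert.IH)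
    show "finite F'"
      using insert.prems(1) by (simp add: F'_def)
    show "disjoint_family_on K T"
      using insert.prems(2) by (auto simp: disjoint_family_on_def)
  qed (use K_F' insert.prems(3) in auto)
  have "card F = card F' + s"
    using Kt \<open>finite (K t)\<close> insert.prems(1) unfolding F'_def
    by (metis card_Diff_subset card_mono le_add_diff_inverse2)
  have "card A * ?q ^ (s * card (insert t T)) = card A * (?q ^ (s * card T) * ?q ^ s)"
    using insert.hyps by (simp add: power_add)
  also have "\<dots> \<le> card B * (?q ^ s - 1) * (?q ^ (s * card T) * ?q ^ s)"
    using A_le by (rule mult_right_mono) simp
  also have "\<dots> = card B * ?q ^ (s * card T) * ((?q ^ s - 1) * ?q ^ s)"
    by (simp only: ac_simps)
  also have "\<dots> \<le> ?q ^ card F' * (?q ^ s - 1) ^ card T * ((?q ^ s - 1) * ?q ^ s)"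
    using IH by (rule mult_right_mono) simp
  also have "\<dots> = ?q ^ card F * (?q ^ s - 1) ^ card (insert t T)"
    using insert.hyps \<open>card F = card F' + s\<close> by (simp add: power_add ac_simps)
  finally show ?case
    unfolding A_def .
qed

lemma ln_one_minus_inverse_power_less_zero:
  fixes q :: real
  assumes "1 < q" and "0 < s"
  shows "ln (1 - 1 / q ^ s) < 0"
proof -
  have "1 < q ^ s"
    using assms by simp
  then show ?thesis
    by (intro ln_less_zero) (auto simp: field_simps)
qed

lemma ln_card_avoiding_le:
  fixes K :: "'t \<Rightarrow> 'm set" and p :: "'t \<Rightarrow> 'm \<Rightarrow> 'q::finite"
  assumes "2 \<le> CARD('q)" and "0 < s" and "finite T" and "finite F" and "disjoint_family_on K T"
    and "\<And>t. t \<in> T \<Longrightarrow> K t \<subseteq> F \<and> card (K t) = s \<and> p t \<in> K t \<rightarrow>\<^sub>E UNIV"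
    and "Y \<subseteq> {f \<in> F \<rightarrow>\<^sub>E UNIV. \<forall>t\<in>T. restrict f (K t) \<noteq> p t}" and "Y \<noteq> {}"
  shows "ln (card Y) \<le> card F * ln CARD('q) + card T * ln (1 - 1 / real CARD('q) ^ s)"
proof -
  let ?q = "real CARD('q)" and ?Avoid = "{f \<in> F \<rightarrow>\<^sub>E UNIV. \<forall>t\<in>T. restrict f (K t) \<noteq> p t}"
  define r where "r = 1 - 1 / ?q ^ s"
  have "1 < ?q ^ s"
    using assms(1,2) by simp
  then have "0 < r" and q_pow_minus: "?q ^ s - 1 = ?q ^ s * r"
    by (auto simp: r_def field_simps)
  have "finite ?Avoid"
    by (rule finite_subset[OF _ finite_PiE[OF \<open>finite F\<close>]]) auto
  then have "card Y \<le> card ?Avoid" and "0 < card Y"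
    using assms(7,8) by (auto intro: card_mono simp: card_gt_0_iff dest: finite_subset)
  have "real (card ?Avoid * CARD('q) ^ (s * card T))
      \<le> real (CARD('q) ^ card F * (CARD('q) ^ s - 1) ^ card T)"
    using card_PiE_avoiding_le[OF assms(3-6)] by (rule of_nat_mono)
  moreover have "real (CARD('q) ^ s - 1) = ?q ^ s - 1"
    using assms(1) by simp
  ultimately have "real (card ?Avoid) * ?q ^ (s * card T) \<le> ?q ^ card F * r ^ card T * ?q ^ (s * card T)"
    by (simp add: q_pow_minus power_mult_distrib power_mult)
  then have "card Y \<le> ?q ^ card F * r ^ card T"
    using \<open>card Y \<le> card ?Avoid\<close> by simp
  then have "ln (card Y) \<le> ln (?q ^ card F * r ^ card T)"
    using \<open>0 < card Y\<close> by (intro ln_mono) auto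
  also have "\<dots> = card F * ln ?q + card T * ln r"
    using \<open>0 < r\<close> assms(1) by (simp add: ln_mult ln_realpow)
  finally show ?thesis
    by (simp add: r_def)
qed

lemma ln_card_restrict_avoiding_le:
  fixes X :: "('m \<Rightarrow> 'q::finite) set" and K :: "'t \<Rightarrow> 'm set" and p :: "'t \<Rightarrow> 'm \<Rightarrow> 'q"
  assumes "2 \<le> CARD('q)" and "0 < s" and "finite F" and "finite A" and "X \<noteq> {}"
    and tiles: "\<And>t. t \<in> A \<Longrightarrow> K t \<subseteq> F \<and> card (K t) = s \<and> p t \<in> K t \<rightarrow>\<^sub>E UNIV"
    and avoids: "\<And>c t. c \<in> X \<Longrightarrow> t \<in> A \<Longrightarrow> restrict c (K t) \<noteq> p t"
    and overlaps: "\<And>u. u \<in> A \<Longrightarrow> card {t \<in> A. K t \<inter> K u \<noteq> {}} \<le> w"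
  shows "ln (card ((\<lambda>c. restrict c F) ` X))
           \<le> card F * ln CARD('q) + card A / w * ln (1 - 1 / real CARD('q) ^ s)"
proof -
  have "K t \<noteq> {}" if "t \<in> A" for t
    using tiles[OF that] \<open>0 < s\<close> by (metis card.empty less_irrefl)
  then obtain T where T: "T \<subseteq> A" "disjoint_family_on K T" "card A \<le> card T * w"
    using large_disjoint_subfamily[OF \<open>finite A\<close> _ overlaps] by metis
  have image_avoids: "(\<lambda>c. restrict c F) ` X \<subseteq> {f \<in> F \<rightarrow>\<^sub>E UNIV. \<forall>t\<in>T. restrict f (K t) \<noteq> p t}"
  proof (rule image_subsetI)
    fix c assume "c \<in> X"
    have "restrict (restrict c F) (K t) = restrict c (K t)" if "t \<in> T" for t
    proof -
      have "K t \<subseteq> F"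
        using tiles T(1) that by blast
      then show ?thesis
        by (simp add: Int_absorb1)
    qed
    with avoids[OF \<open>c \<in> X\<close>] T(1) show "restrict c F \<in> {f \<in> F \<rightarrow>\<^sub>E UNIV. \<forall>t\<in>T. restrict f (K t) \<noteq> p t}"
      by auto
  qed
  have "ln (card ((\<lambda>c. restrict c F) ` X))
      \<le> card F * ln CARD('q) + card T * ln (1 - 1 / real CARD('q) ^ s)"
  proof (rule ln_card_avoiding_le[OF assms(1,2) finite_subset[OF T(1) \<open>finite A\<close>] \<open>finite F\<close> T(2) _ image_avoids])
    show "K t \<subseteq> F \<and> card (K t) = s \<and> p t \<in> K t \<rightarrow>\<^sub>E UNIV" if "t \<in> T" for t
      using tiles T(1) that by blast
  qed (use \<open>X \<noteq> {}\<close> in simp)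
  also have "\<dots> \<le> card F * ln CARD('q) + card A / w * ln (1 - 1 / real CARD('q) ^ s)"
  proof -
    have "card A / w \<le> card T"
        \<comment> \<open>for \<open>w = 0\<close> the left-hand side is \<open>card A / 0 = 0\<close>\<close>
      using T(3) by (cases "w = 0") (simp_all add: field_simps flip: of_nat_mult)
    moreover have "ln (1 - 1 / real CARD('q) ^ s) \<le> 0"
      using ln_one_minus_inverse_power_less_zero[of "real CARD('q)" s] assms(1,2) by simp
    ultimately have "card T * ln (1 - 1 / real CARD('q) ^ s) \<le> card A / w * ln (1 - 1 / real CARD('q) ^ s)"
      by (rule mult_right_mono_neg)
    then show ?thesis
      by simp
  qed
  finally show ?thesis .
qed

lemma card_lt_twice_card_interior:
  fixes f :: "'m \<Rightarrow> 'a \<Rightarrow> 'm"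
  assumes "finite F" and "F \<noteq> {}" and "finite E"
    and small_boundary: "\<And>a. a \<in> E \<Longrightarrow> card (F - {m. f m a \<in> F}) / card F < 1 / (2 * real (card E))"
  shows "card F < 2 * card {m \<in> F. \<forall>a\<in>E. f m a \<in> F}"
proof -
  let ?I = "{m \<in> F. \<forall>a\<in>E. f m a \<in> F}"
  have "card (F - ?I) < card F / 2"
  proof (cases "E = {}")
    case True
    then show ?thesis
      using \<open>finite F\<close> \<open>F \<noteq> {}\<close> by (simp add: card_gt_0_iff)
  next
    case False
    have "F - ?I = (\<Union>a\<in>E. F - {m. f m a \<in> F})"
      by auto
    then have "card (F - ?I) \<le> (\<Sum>a\<in>E. card (F - {m. f m a \<in> F}))"
      using card_UN_le[OF \<open>finite E\<close>, of "\<lambda>a. F - {m. f m a \<in> F}"] by simp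
    then have "real (card (F - ?I)) \<le> real (\<Sum>a\<in>E. card (F - {m. f m a \<in> F}))"
      by (rule of_nat_mono)
    also have "\<dots> = (\<Sum>a\<in>E. real (card (F - {m. f m a \<in> F})))"
      by (rule of_nat_sum)
    also have "\<dots> < (\<Sum>a\<in>E. card F / (2 * card E))"
    proof (rule sum_strict_mono[OF \<open>finite E\<close> False])
      fix a assume "a \<in> E"
      have "0 < real (card F)"
        using \<open>finite F\<close> \<open>F \<noteq> {}\<close> by (simp add: card_gt_0_iff)
      then show "real (card (F - {m. f m a \<in> F})) < card F / (2 * card E)"
        using small_boundary[OF \<open>a \<in> E\<close>] by (simp add: pos_divide_less_eq)
    qed
    also have "\<dots> = card F / 2"
      using \<open>finite E\<close> False by simp
    finally show ?thesis .
  qed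
  moreover have "card F = card ?I + card (F - ?I)"
    using \<open>finite F\<close> by (simp add: card_Diff_subset card_mono)
  ultimately show ?thesis
    by linarith
qed

locale cell_space_action =
  fixes G :: "('g, 'b) monoid_scheme" (structure) and act :: "'g \<Rightarrow> 'm \<Rightarrow> 'm"
    and m0 :: 'm and gfam :: "'m \<Rightarrow> 'g"
  assumes cell_space: "cell_space G act m0 gfam"
begin

sublocale group G
  using cell_space by (simp add: cell_space_def)

lemma act_one [simp]: "act \<one> m = m"
  using cell_space by (simp add: cell_space_def)

lemma act_mult: "g \<in> carrier G \<Longrightarrow> h \<in> carrier G \<Longrightarrow> act (g \<otimes> h) m = act g (act h m)"
  using cell_space by (simp add: cell_space_def)

lemma gfam_carrier [simp]: "gfam m \<in> carrier G"
  and act_gfam [simp]: "act (gfam m) m0 = m"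
  using cell_space by (simp_all add: cell_space_def)

lemma act_inv_act [simp]: "g \<in> carrier G \<Longrightarrow> act (inv g) (act g m) = m"
  by (simp flip: act_mult)

lemma act_inv_gfam [simp]: "act (inv (gfam m)) m = m0"
  by (metis act_gfam act_inv_act gfam_carrier)

lemma inj_act: "g \<in> carrier G \<Longrightarrow> inj (act g)"
  by (metis act_inv_act injI)

lemma subgroup_stab: "subgroup (stab G act m0) G"
proof (rule subgroupI)
  fix g h assume "g \<in> stab G act m0" "h \<in> stab G act m0"
  then show "inv g \<in> stab G act m0" "g \<otimes> h \<in> stab G act m0"
    by (auto simp: stab_def act_mult dest: act_inv_act[of g m0])
qed (auto simp: stab_def)

lemma rsemi_l_coset:
  assumes "h \<in> carrier G"
  shows "rsemi G act m0 gfam m (h <#\<^bsub>G\<^esub> stab G act m0) = act (gfam m \<otimes> h) m0"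
proof -
  let ?S = "stab G act m0"
  define r where "r = (SOME r. r \<in> carrier G \<and> h <#\<^bsub>G\<^esub> ?S = r <#\<^bsub>G\<^esub> ?S)"
  have "r \<in> carrier G" "h <#\<^bsub>G\<^esub> ?S = r <#\<^bsub>G\<^esub> ?S"
    unfolding r_def using someI[of "\<lambda>r. r \<in> carrier G \<and> h <#\<^bsub>G\<^esub> ?S = r <#\<^bsub>G\<^esub> ?S" h] assms by auto
  moreover have "h \<in> h <#\<^bsub>G\<^esub> ?S"
    using assms subgroup_stab by (simp add: l_coset_def) (metis r_one subgroup.one_closed)
  ultimately obtain g0 where "g0 \<in> ?S" "h = r \<otimes> g0"
    unfolding l_coset_def by auto
  then have "act (gfam m \<otimes> h) m0 = act (gfam m \<otimes> r) (act g0 m0)"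
    using \<open>r \<in> carrier G\<close> by (simp add: stab_def act_mult m_assoc)
  also have "\<dots> = act (gfam m \<otimes> r) m0"
    using \<open>g0 \<in> ?S\<close> by (simp add: stab_def)
  finally show ?thesis
    by (simp add: rsemi_def r_def)
qed

lemma rsemi_gfam: "rsemi G act m0 gfam m (gfam a <#\<^bsub>G\<^esub> stab G act m0) = act (gfam m) a"
  by (simp add: rsemi_l_coset act_mult)

lemma eventually_folner_boundary_less:
  assumes "right_folner_net G act m0 gfam rel F" and "finite E" and "0 < \<epsilon>"
  shows "\<forall>\<^sub>F i in net_filter rel. \<forall>a\<in>E. card (F i - {m. act (gfam m) a \<in> F i}) / card (F i) < \<epsilon>"
proof (rule eventually_ball_finite[OF \<open>finite E\<close>], rule ballI, rule order_tendstoD(2))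
  fix a
  have "gfam a <#\<^bsub>G\<^esub> stab G act m0 \<in> cosets G act m0"
    by (auto simp: cosets_def)
  with assms(1) have "((\<lambda>i. card (F i - {m. rsemi G act m0 gfam m (gfam a <#\<^bsub>G\<^esub> stab G act m0) \<in> F i})
      / card (F i)) \<longlongrightarrow> 0) (net_filter rel)"
    by (simp add: right_folner_net_def)
  then show "((\<lambda>i. card (F i - {m. act (gfam m) a \<in> F i}) / card (F i)) \<longlongrightarrow> 0) (net_filter rel)"
    by (simp add: rsemi_gfam)
qed (use \<open>0 < \<epsilon>\<close> in simp)

lemma global_transition_shift:
  assumes sca: "semi_cellular_automaton G act m0 N" and inv: "bullet_invariant G act m0 N \<delta>"
    and "g \<in> carrier G"
  shows "global_transition G act m0 gfam N \<delta> (\<lambda>x. c (act g x)) e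
       = global_transition G act m0 gfam N \<delta> c (act g e)"
proof -
  let ?S = "stab G act m0" and ?rsemi = "rsemi G act m0 gfam"
  define g0 where "g0 = inv (gfam (act g e)) \<otimes> g \<otimes> gfam e"
  have "g0 \<in> carrier G" and gfam_g0: "gfam (act g e) \<otimes> g0 = g \<otimes> gfam e"
    using \<open>g \<in> carrier G\<close> by (simp_all add: g0_def m_assoc[symmetric])
  have "act g0 m0 = act (inv (gfam (act g e))) (act (gfam (act g e) \<otimes> g0) m0)"
    using \<open>g0 \<in> carrier G\<close> by (simp add: act_mult)
  then have "g0 \<in> ?S"
    using \<open>g \<in> carrier G\<close> \<open>g0 \<in> carrier G\<close> by (simp add: stab_def gfam_g0 act_mult)
  define pat where "pat = restrict (\<lambda>n. c (?rsemi (act g e) n)) N"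
  have "(\<lambda>n\<in>N. pat (inv (inv g0) <#\<^bsub>G\<^esub> n)) = (\<lambda>n\<in>N. c (act g (?rsemi e n)))"
  proof (rule restrict_ext)
    fix n assume "n \<in> N"
    obtain h where h: "h \<in> carrier G" "n = h <#\<^bsub>G\<^esub> ?S"
      using sca \<open>n \<in> N\<close> by (auto simp: semi_cellular_automaton_def cosets_def)
    have "g0 <#\<^bsub>G\<^esub> n \<in> N"
      using sca \<open>n \<in> N\<close> \<open>g0 \<in> ?S\<close> by (simp add: semi_cellular_automaton_def)
    moreover have "g0 <#\<^bsub>G\<^esub> n = (g0 \<otimes> h) <#\<^bsub>G\<^esub> ?S"
      using h \<open>g0 \<in> carrier G\<close> subgroup.subset[OF subgroup_stab] by (simp add: lcos_m_assoc)
    moreover have "gfam (act g e) \<otimes> (g0 \<otimes> h) = g \<otimes> (gfam e \<otimes> h)"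
      using gfam_g0 h \<open>g \<in> carrier G\<close> \<open>g0 \<in> carrier G\<close> by (metis gfam_carrier m_assoc)
    ultimately show "pat (inv (inv g0) <#\<^bsub>G\<^esub> n) = c (act g (?rsemi e n))"
      using h \<open>g \<in> carrier G\<close> \<open>g0 \<in> carrier G\<close> by (simp add: pat_def rsemi_l_coset act_mult)
  qed
  moreover have "inv g0 \<in> ?S" and "pat \<in> N \<rightarrow>\<^sub>E UNIV"
    using \<open>g0 \<in> ?S\<close> subgroup.m_inv_closed[OF subgroup_stab] by (auto simp: pat_def)
  ultimately have "\<delta> (restrict (\<lambda>n. c (act g (?rsemi e n))) N) = \<delta> pat"
    using inv unfolding bullet_invariant_def by metis
  then show ?thesis
    by (simp add: global_transition_def pat_def)
qed

lemma not_surj_imp_forbidden_pattern: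
  fixes \<delta> :: "('g set \<Rightarrow> 'q::finite) \<Rightarrow> 'q"
  assumes sca: "semi_cellular_automaton G act m0 N" and "finite N"
    and inv: "bullet_invariant G act m0 N \<delta>"
    and not_surj: "\<not> surj (global_transition G act m0 gfam N \<delta>)"
  obtains E y where "finite E" and "E \<noteq> {}"
    and "\<And>c t. c \<in> range (global_transition G act m0 gfam N \<delta>) \<Longrightarrow>
      \<exists>e\<in>E. c (act (gfam t) e) \<noteq> y e"
proof -
  let ?\<Delta> = "global_transition G act m0 gfam N \<delta>"
  obtain y where "y \<notin> range ?\<Delta>"
    using not_surj by blast
  have "\<exists>E. finite E \<and> (\<forall>c. \<exists>m\<in>E. ?\<Delta> c m \<noteq> y m)"
  proof (rule ccontr)
    assume "\<nexists>E. finite E \<and> (\<forall>c. \<exists>m\<in>E. ?\<Delta> c m \<noteq> y m)"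
    then have "\<exists>c. ?\<Delta> c = y"
      using \<open>finite N\<close>
      by (intro finitely_realisable_imp_realisable[where D = "\<lambda>m. rsemi G act m0 gfam m ` N"])
        (auto simp: global_transition_def cong: restrict_cong)
    with \<open>y \<notin> range ?\<Delta>\<close> show False
      by auto
  qed
  then obtain E where "finite E" and E: "\<And>c. \<exists>m\<in>E. ?\<Delta> c m \<noteq> y m"
    by blast
  have "\<exists>e\<in>E. ?\<Delta> c (act (gfam t) e) \<noteq> y e" for c t
    using E[of "\<lambda>x. c (act (gfam t) x)"] global_transition_shift[OF sca inv gfam_carrier] by metis
  then have "E \<noteq> {}"
    by blast
  with \<open>finite E\<close> that \<open>\<And>c t. \<exists>e\<in>E. ?\<Delta> c (act (gfam t) e) \<noteq> y e\<close> show thesis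
    by blast
qed

definition overlap_offsets :: "'m set \<Rightarrow> 'm set" where
  "overlap_offsets E = (\<lambda>(a, b, g0). act (gfam b \<otimes> g0 \<otimes> inv (gfam a)) m0) ` (E \<times> E \<times> stab G act m0)"

lemma translates_meeting_subset:
  "{t. act (gfam t) ` E \<inter> act (gfam u) ` E \<noteq> {}} \<subseteq> act (gfam u) ` overlap_offsets E"
proof
  fix t assume "t \<in> {t. act (gfam t) ` E \<inter> act (gfam u) ` E \<noteq> {}}"
  then obtain a b where "a \<in> E" "b \<in> E" and meet: "act (gfam t) a = act (gfam u) b"
    by auto
  define h where "h = gfam u \<otimes> gfam b"
  define g0 where "g0 = inv h \<otimes> gfam t \<otimes> gfam a"
  have "h \<in> carrier G" "g0 \<in> carrier G"
    by (simp_all add: h_def g0_def)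
  have "act g0 m0 = act (inv h) (act h m0)"
    using meet by (simp add: g0_def h_def act_mult)
  then have "g0 \<in> stab G act m0"
    using \<open>h \<in> carrier G\<close> \<open>g0 \<in> carrier G\<close> by (simp add: stab_def)
  have "gfam t = h \<otimes> g0 \<otimes> inv (gfam a)"
    using \<open>h \<in> carrier G\<close> by (simp add: g0_def m_assoc flip: m_assoc[of h])
  then have "t = act (gfam u) (act (gfam b \<otimes> g0 \<otimes> inv (gfam a)) m0)"
    using \<open>g0 \<in> carrier G\<close> by (metis act_gfam act_mult gfam_carrier h_def inv_closed m_assoc m_closed)
  with \<open>a \<in> E\<close> \<open>b \<in> E\<close> \<open>g0 \<in> stab G act m0\<close> show "t \<in> act (gfam u) ` overlap_offsets E"
    by (force simp: overlap_offsets_def)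
qed

lemma finite_overlap_offsets: "finite E \<Longrightarrow> finite (stab G act m0) \<Longrightarrow> finite (overlap_offsets E)"
  by (simp add: overlap_offsets_def)

lemma overlap_offsets_nonempty: "E \<noteq> {} \<Longrightarrow> overlap_offsets E \<noteq> {}"
  using subgroup.one_closed[OF subgroup_stab] by (auto simp: overlap_offsets_def)

lemma card_translates_meeting_le:
  assumes "finite E" and "finite (stab G act m0)"
  shows "card {t \<in> A. act (gfam t) ` E \<inter> act (gfam u) ` E \<noteq> {}} \<le> card (overlap_offsets E)"
proof -
  have "card {t \<in> A. act (gfam t) ` E \<inter> act (gfam u) ` E \<noteq> {}} \<le> card (act (gfam u) ` overlap_offsets E)"
    using translates_meeting_subset finite_overlap_offsets[OF assms] by (intro card_mono) blast+
  also have "\<dots> \<le> card (overlap_offsets E)"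
    by (rule card_image_le) (rule finite_overlap_offsets[OF assms])
  finally show ?thesis .
qed

lemma ln_card_restrict_forbidden_le:
  fixes X :: "('m \<Rightarrow> 'q::finite) set" and y :: "'m \<Rightarrow> 'q"
  assumes "2 \<le> CARD('q)" and "finite E" and "E \<noteq> {}" and "finite (stab G act m0)"
    and "finite F" and "F \<noteq> {}" and "X \<noteq> {}"
    and forbidden: "\<And>c t. c \<in> X \<Longrightarrow> \<exists>e\<in>E. c (act (gfam t) e) \<noteq> y e"
    and folner: "\<And>a. a \<in> E \<Longrightarrow> card (F - {m. act (gfam m) a \<in> F}) / card F < 1 / (2 * real (card E))"
  shows "ln (card ((\<lambda>c. restrict c F) ` X)) / card F
           \<le> ln CARD('q) + ln (1 - 1 / real CARD('q) ^ card E) / (2 * real (card (overlap_offsets E)))"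
proof -
  let ?q = "real CARD('q)" and ?r = "1 - 1 / real CARD('q) ^ card E"
  let ?K = "\<lambda>t. act (gfam t) ` E" and ?A = "{t \<in> F. \<forall>a\<in>E. act (gfam t) a \<in> F}"
  let ?w = "card (overlap_offsets E)"
  have "card F < 2 * card ?A"
    using card_lt_twice_card_interior[of F E "\<lambda>m a. act (gfam m) a"] folner assms(2,5,6) by simp
  define p where "p t = restrict (\<lambda>x. y (act (inv (gfam t)) x)) (?K t)" for t
  have "ln (card ((\<lambda>c. restrict c F) ` X)) \<le> card F * ln ?q + card ?A / ?w * ln ?r"
  proof (rule ln_card_restrict_avoiding_le[where p = p])
    show "0 < card E"
      using \<open>finite E\<close> \<open>E \<noteq> {}\<close> by (simp add: card_gt_0_iff)
    show "?K t \<subseteq> F \<and> card (?K t) = card E \<and> p t \<in> ?K t \<rightarrow>\<^sub>E UNIV" if "t \<in> ?A" for t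
    proof (intro conjI)
      show "?K t \<subseteq> F"
        using that by blast
      show "card (?K t) = card E"
        by (rule card_image) (rule inj_on_subset[OF inj_act[OF gfam_carrier] subset_UNIV])
    qed (simp add: p_def)
    show "restrict c (?K t) \<noteq> p t" if "c \<in> X" for c t
    proof
      assume pattern: "restrict c (?K t) = p t"
      obtain e where "e \<in> E" "c (act (gfam t) e) \<noteq> y e"
        using forbidden[OF \<open>c \<in> X\<close>] by blast
      moreover have "act (gfam t) e \<in> ?K t"
        using \<open>e \<in> E\<close> by blast
      ultimately show False
        using fun_cong[OF pattern, of "act (gfam t) e"] by (simp add: p_def)
    qed
    show "card {t \<in> ?A. ?K t \<inter> ?K u \<noteq> {}} \<le> ?w" for u
      using card_translates_meeting_le[OF \<open>finite E\<close> \<open>finite (stab G act m0)\<close>] .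
  qed (use assms in auto)
  also have "\<dots> \<le> card F * ln ?q + card F / (2 * ?w) * ln ?r"
  proof -
    have "0 < ?w"
      using finite_overlap_offsets overlap_offsets_nonempty assms(2-4) by (simp add: card_gt_0_iff)
    then have "card F / (2 * ?w) \<le> card ?A / ?w"
      using \<open>card F < 2 * card ?A\<close> by (simp add: field_simps)
    moreover have "ln ?r \<le> 0"
      using ln_one_minus_inverse_power_less_zero[of ?q "card E"] assms(1-3) by (simp add: card_gt_0_iff)
    ultimately have "card ?A / ?w * ln ?r \<le> card F / (2 * ?w) * ln ?r"
      by (rule mult_right_mono_neg)
    then show ?thesis
      by simp
  qed
  finally show ?thesis
    using \<open>finite F\<close> \<open>F \<noteq> {}\<close> by (simp add: divide_le_eq card_gt_0_iff field_simps)
qed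

end

theorem theorem4:
  fixes G :: "('g, 'b) monoid_scheme" and act :: "'g \<Rightarrow> 'm \<Rightarrow> 'm" and m0 :: 'm
    and gfam :: "'m \<Rightarrow> 'g" and N :: "'g set set" and \<delta> :: "('g set \<Rightarrow> 'q::finite) \<Rightarrow> 'q"
    and rel :: "'i \<Rightarrow> 'i \<Rightarrow> bool" and F :: "'i \<Rightarrow> 'm set"
  assumes "cell_space G act m0 gfam"
    and "right_amenable G act m0 gfam"
    and "finite (stab G act m0)"
    and "semi_cellular_automaton G act m0 N"
    and "finite N"
    and "right_folner_net G act m0 gfam rel F"
    and "bullet_invariant G act m0 N \<delta>"
    and "card (UNIV :: 'q set) \<ge> 2"
    and "\<not> surj (global_transition G act m0 gfam N \<delta>)"
  shows "entropy rel F (range (global_transition G act m0 gfam N \<delta>)) < ereal (ln (real (card (UNIV :: 'q set))))"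
proof -
  interpret cell_space_action G act m0 gfam
    by (rule cell_space_action.intro) (fact assms(1))
  let ?\<Delta> = "global_transition G act m0 gfam N \<delta>" and ?q = "real CARD('q)"
  obtain E y where E: "finite E" "E \<noteq> {}"
    and forbidden: "\<And>c t. c \<in> range ?\<Delta> \<Longrightarrow> \<exists>e\<in>E. c (act (gfam t) e) \<noteq> y e"
    by (rule not_surj_imp_forbidden_pattern[OF assms(4,5,7,9)]) auto
  define bound where "bound = ln ?q + ln (1 - 1 / ?q ^ card E) / (2 * real (card (overlap_offsets E)))"
  have "\<forall>\<^sub>F i in net_filter rel.
      \<forall>a\<in>E. card (F i - {m. act (gfam m) a \<in> F i}) / card (F i) < 1 / (2 * real (card E))"
    using E by (intro eventually_folner_boundary_less[OF assms(6)]) (simp_all add: card_gt_0_iff)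
  then have "\<forall>\<^sub>F i in net_filter rel. ln (card ((\<lambda>c. restrict c (F i)) ` range ?\<Delta>)) / card (F i) \<le> bound"
    by (rule eventually_mono) (use assms(3,6,8) E forbidden in
        \<open>auto simp: bound_def right_folner_net_def intro!: ln_card_restrict_forbidden_le[where y = y]\<close>)
  then have "entropy rel F (range ?\<Delta>) \<le> bound"
    unfolding entropy_def by (intro Limsup_bounded) (auto elim: eventually_mono)
  also have "\<dots> < ereal (ln ?q)"
    using ln_one_minus_inverse_power_less_zero[of ?q "card E"] assms(3,8) E
      finite_overlap_offsets overlap_offsets_nonempty
    by (simp add: bound_def divide_neg_pos card_gt_0_iff)
  finally show ?thesis .
qed

end
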